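(* Let $G$ be a stitched 2-ichromatic ordered graph with vertices $v_1<\dots<v_{m+n}$ whose parts are $\{v_1,\ldots,v_m\}$ and $\{v_{m+1},\ldots,v_{m+n}\}$. If $v_1v_{m+n}$ and $v_mv_{m+1}$ are edges of $G$, then $R(G)\ge 5r+1$, where $r=\min(m,n)-1$.
   Context: An ordered graph is a graph together with a specified linear ordering of its vertex set. An ordered graph $G$ is contained in an ordered graph $H$ if there is an order-preserving injection $V(G)\to V(H)$ mapping edges to edges. An interval coloring of an ordered graph is a partition of its vertex set into independent sets each consisting of consecutive vertices (called parts); an ordered graph is 2-ichromatic if its minimum number of parts in an interval coloring is 2. A 2-ichromatic ordered graph is stitched if the four vertices consisting of the first and last vertex of each of the two parts lie in a single connected component. $R(G)$ denotes the 2-color ordered Ramsey number: the minimum $N$ such that every 2-coloring of the edges of the ordered complete graph on $N$ vertices contains a monochromatic copy of $G$. *)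

theory Defs
  imports Main
begin

text \<open>An ordered graph on k vertices is represented with vertex set {0..<k}
  (ordered by the natural order) and a symmetric irreflexive edge relation E
  supported on {0..<k}.\<close>

definition ordered_graph :: "nat \<Rightarrow> (nat \<Rightarrow> nat \<Rightarrow> bool) \<Rightarrow> bool" where
  "ordered_graph k E \<longleftrightarrow>
     (\<forall>x y. E x y \<longrightarrow> x < k \<and> y < k \<and> x \<noteq> y \<and> E y x)"

definition independent :: "(nat \<Rightarrow> nat \<Rightarrow> bool) \<Rightarrow> nat set \<Rightarrow> bool" where
  "independent E S \<longleftrightarrow> (\<forall>x\<in>S. \<forall>y\<in>S. \<not> E x y)"

definition interval_coloring :: "nat \<Rightarrow> (nat \<Rightarrow> nat \<Rightarrow> bool) \<Rightarrow> nat \<Rightarrow> bool" where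
  "interval_coloring k E p \<longleftrightarrow>
     (\<exists>b :: nat \<Rightarrow> nat. b 0 = 0 \<and> b p = k \<and> (\<forall>i<p. b i < b (Suc i)) \<and>
        (\<forall>i<p. independent E {b i..<b (Suc i)}))"

definition ichromatic_number :: "nat \<Rightarrow> (nat \<Rightarrow> nat \<Rightarrow> bool) \<Rightarrow> nat" where
  "ichromatic_number k E = (LEAST p. interval_coloring k E p)"

definition two_ichromatic :: "nat \<Rightarrow> (nat \<Rightarrow> nat \<Rightarrow> bool) \<Rightarrow> bool" where
  "two_ichromatic k E \<longleftrightarrow> ichromatic_number k E = 2"

text \<open>Stitched, for a 2-ichromatic graph with parts {0..<m} and {m..<m+n}:
  the first and last vertices 0, m-1, m, m+n-1 lie in one connected component.\<close>

definition stitched :: "nat \<Rightarrow> nat \<Rightarrow> (nat \<Rightarrow> nat \<Rightarrow> bool) \<Rightarrow> bool" where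
  "stitched m n E \<longleftrightarrow>
     E\<^sup>*\<^sup>* 0 (m - 1) \<and> E\<^sup>*\<^sup>* 0 m \<and> E\<^sup>*\<^sup>* 0 (m + n - 1)"

text \<open>A 2-coloring of the edges of the ordered complete graph on {0..<N}:
  the edge {i,j} with i < j gets colour c i j.\<close>

definition mono_copy ::
  "nat \<Rightarrow> (nat \<Rightarrow> nat \<Rightarrow> bool) \<Rightarrow> nat \<Rightarrow> (nat \<Rightarrow> nat \<Rightarrow> bool) \<Rightarrow> bool \<Rightarrow> bool" where
  "mono_copy k E N c col \<longleftrightarrow>
     (\<exists>f. (\<forall>x<k. f x < N) \<and> (\<forall>x y. x < y \<and> y < k \<longrightarrow> f x < f y) \<and>
          (\<forall>x y. x < y \<and> E x y \<longrightarrow> c (f x) (f y) = col))"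

definition ramsey_arrow :: "nat \<Rightarrow> nat \<Rightarrow> (nat \<Rightarrow> nat \<Rightarrow> bool) \<Rightarrow> bool" where
  "ramsey_arrow N k E \<longleftrightarrow> (\<forall>c. \<exists>col. mono_copy k E N c col)"

definition ordered_ramsey :: "nat \<Rightarrow> (nat \<Rightarrow> nat \<Rightarrow> bool) \<Rightarrow> nat" where
  "ordered_ramsey k E = (LEAST N. ramsey_arrow N k E)"

end

theory Submission
  imports Defs "HOL-Library.Ramsey"
begin

text \<open>Split the vertices of the complete ordered graph on 5r vertices into five
  consecutive blocks of r vertices, numbered 0 to 4, and colour an edge red exactly when its
  blocks form one of the pairs 0-4, 1-2, 2-3, 1-1, 2-2, 3-3. Each part of G has at least r+1
  vertices, so in any copy of G the first and last vertices of the two parts are mapped into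
  blocks a < b \<le> c < d. The outer edge (blocks a, d) and the inner edge (blocks b, c)
  cannot both be blue, and if the outer edge is red then a = 0. But red edges join block 0
  only to block 4, so the red component of the first vertex stays in blocks 0 and 4; since G
  is stitched, the last vertex of the first part lies in that component, which is impossible
  for 0 < b \<le> c < 4.\<close>

lemma ramsey_arrow_mono:
  assumes "ramsey_arrow N k E" and "N \<le> N'"
  shows "ramsey_arrow N' k E"
  unfolding ramsey_arrow_def mono_copy_def
proof
  fix c :: "nat \<Rightarrow> nat \<Rightarrow> bool"
  obtain col f where "\<forall>x<k. f x < N" and "\<forall>x y. x < y \<and> y < k \<longrightarrow> f x < f y"
    and "\<forall>x y. x < y \<and> E x y \<longrightarrow> c (f x) (f y) = col"
    using assms(1) unfolding ramsey_arrow_def mono_copy_def by blast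
  moreover have "\<forall>x<k. f x < N'"
    using calculation(1) assms(2) order_less_le_trans by blast
  ultimately show "\<exists>col f. (\<forall>x<k. f x < N') \<and> (\<forall>x y. x < y \<and> y < k \<longrightarrow> f x < f y)
      \<and> (\<forall>x y. x < y \<and> E x y \<longrightarrow> c (f x) (f y) = col)"
    by blast
qed

lemma mono_copy_of_homogeneous:
  assumes og: "ordered_graph k E" and H: "H \<in> nsets {..<N} k"
    and hom: "\<And>u w. u \<in> H \<Longrightarrow> w \<in> H \<Longrightarrow> u < w \<Longrightarrow> c u w = col"
  shows "mono_copy k E N c col"
proof -
  define xs where "xs = sorted_list_of_set H"
  have H_sub: "H \<subseteq> {..<N}" and len: "length xs = k" and set_xs: "set xs = H"
    using H by (auto simp: nsets_def xs_def)
  have sorted: "sorted_wrt (<) xs"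
    by (simp add: xs_def)
  show ?thesis
    unfolding mono_copy_def
  proof (intro exI[of _ "(!) xs"] conjI allI impI)
    fix x y
    show "x < k \<Longrightarrow> xs ! x < N"
      using len set_xs H_sub nth_mem by fastforce
    show less: "x < y \<and> y < k \<Longrightarrow> xs ! x < xs ! y"
      using sorted len sorted_wrt_nth_less by blast
    assume xy: "x < y \<and> E x y"
    then have "y < k"
      using og by (auto simp: ordered_graph_def)
    then show "c (xs ! x) (xs ! y) = col"
      using hom less xy len set_xs nth_mem by (metis order.strict_trans)
  qed
qed

lemma ramsey_arrow_exists:
  assumes "ordered_graph k E"
  shows "\<exists>N. ramsey_arrow N k E"
proof -
  obtain N :: nat where N: "partn_lst {..<N} [k, k] 2"
    using ramsey_full by blast
  have "\<exists>col. mono_copy k E N c col" for c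
  proof -
    define F where "F S = (if c (Min S) (Max S) then 0 else 1::nat)" for S
    have F: "F \<in> nsets {..<N} 2 \<rightarrow> {..<2}"
      by (auto simp: F_def)
    obtain i H where i: "i < length [k, k]" and H_i: "H \<in> nsets {..<N} ([k, k] ! i)"
      and FH: "F ` nsets H 2 \<subseteq> {i}"
      using partn_lstE[OF N F] by auto
    have "H \<in> nsets {..<N} k"
      using H_i i by (cases i) auto
    moreover have "c u w = (i = 0)" if "u \<in> H" "w \<in> H" "u < w" for u w
    proof -
      have "{u, w} \<in> nsets H 2"
        using that by (auto simp: nsets_def)
      then have "F {u, w} = i"
        using FH by blast
      then show ?thesis
        using that i by (auto simp: F_def less_2_cases_iff split: if_splits)
    qed
    ultimately show ?thesis
      using mono_copy_of_homogeneous[OF assms] by blast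
  qed
  then show ?thesis
    unfolding ramsey_arrow_def by blast
qed

lemma less_ordered_ramsey:
  assumes "ordered_graph k E" and "\<not> ramsey_arrow N k E"
  shows "N < ordered_ramsey k E"
proof (rule ccontr)
  assume "\<not> N < ordered_ramsey k E"
  moreover have "ramsey_arrow (ordered_ramsey k E) k E"
    using ramsey_arrow_exists[OF assms(1)] unfolding ordered_ramsey_def by (rule LeastI_ex)
  ultimately show False
    using assms(2) ramsey_arrow_mono by (meson not_less)
qed

lemma increasing_add_diff_le:
  fixes f :: "nat \<Rightarrow> nat"
  assumes "\<forall>x y. x < y \<and> y < k \<longrightarrow> f x < f y" and "i \<le> j" and "j < k"
  shows "f i + (j - i) \<le> f j"
  using assms(2,3)
proof (induction j)
  case 0
  then show ?case by simp
next
  case (Suc j)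
  show ?case
  proof (cases "i = Suc j")
    case False
    with Suc have "i \<le> j" and "f i + (j - i) \<le> f j" and "f j < f (Suc j)"
      using assms(1) by auto
    then show ?thesis by linarith
  qed simp
qed

lemma increasing_div_less:
  fixes f :: "nat \<Rightarrow> nat"
  assumes "\<forall>x y. x < y \<and> y < k \<longrightarrow> f x < f y" and "j < k"
    and "0 < r" and "r \<le> j - i"
  shows "f i div r < f j div r"
proof -
  have "i \<le> j"
    using assms(3,4) by simp
  then have "f i + r \<le> f j"
    using increasing_add_diff_le[OF assms(1) _ assms(2)] assms(4) by fastforce
  then have "(f i + r) div r \<le> f j div r"
    by (rule div_le_mono)
  then show ?thesis
    using \<open>0 < r\<close> by simp
qed

definition red_block_pairs :: "(nat \<times> nat) set" where
  "red_block_pairs = {(0, 4), (1, 2), (2, 3), (1, 1), (2, 2), (3, 3)}"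

definition block_colouring :: "nat \<Rightarrow> nat \<Rightarrow> nat \<Rightarrow> bool" where
  "block_colouring r u w \<longleftrightarrow> (u div r, w div r) \<in> red_block_pairs"

lemma red_block_pair_nested:
  assumes "a < b" "b \<le> c" "c < d" "d \<le> 4"
  shows "(a, d) \<in> red_block_pairs \<or> (b, c) \<in> red_block_pairs"
proof -
  have "d \<in> {2, 3, 4}" "a < 3" "b \<in> {1, 2, 3}" "c \<in> {1, 2, 3}"
    using assms by auto
  then show ?thesis
    using assms unfolding red_block_pairs_def by auto
qed

lemma red_block_pair_spread:
  assumes "a + 1 < d" and "(a, d) \<in> red_block_pairs"
  shows "a = 0 \<and> d = 4"
  using assms unfolding red_block_pairs_def by auto

lemma red_block_pair_outer:
  assumes "(a, d) \<in> red_block_pairs"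
  shows "a \<in> {0, 4} \<longleftrightarrow> d \<in> {0, 4}"
  using assms unfolding red_block_pairs_def by auto

lemma red_component_outer_blocks:
  fixes f :: "'a::linorder \<Rightarrow> nat"
  assumes sym: "\<And>x y. E x y \<Longrightarrow> E y x"
    and red: "\<And>x y. x < y \<Longrightarrow> E x y \<Longrightarrow> block_colouring r (f x) (f y)"
    and start: "f u div r \<in> {0, 4}" and path: "E\<^sup>*\<^sup>* u v"
  shows "f v div r \<in> {0, 4}"
  using path
proof (induction rule: rtranclp_induct)
  case (step y z)
  consider "y < z" | "y = z" | "z < y"
    using less_linear[of y z] by blast
  then show ?case
  proof cases
    case 1
    have "(f y div r, f z div r) \<in> red_block_pairs"
      using red[OF 1 step(2)] unfolding block_colouring_def .
    then show ?thesis
      using red_block_pair_outer step.IH by simp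
  next
    case 3
    have "(f z div r, f y div r) \<in> red_block_pairs"
      using red[OF 3 sym[OF step(2)]] unfolding block_colouring_def .
    then show ?thesis
      using red_block_pair_outer step.IH by simp
  qed (use step in simp)
qed (use start in simp)

lemma increasing_end_blocks:
  fixes f :: "nat \<Rightarrow> nat"
  assumes incr: "\<forall>x y. x < y \<and> y < m + n \<longrightarrow> f x < f y"
    and bound: "f (m + n - 1) < 5 * r" and "0 < r" and "r < m" and "r < n"
  shows "f 0 div r < f (m - 1) div r" and "f (m - 1) div r \<le> f m div r"
    and "f m div r < f (m + n - 1) div r" and "f (m + n - 1) div r \<le> 4"
proof -
  show "f 0 div r < f (m - 1) div r"
    using increasing_div_less[OF incr _ \<open>0 < r\<close>, of "m - 1" 0] assms(4,5) by simp
  show "f (m - 1) div r \<le> f m div r"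
    using incr assms(4,5) by (simp add: div_le_mono less_imp_le)
  show "f m div r < f (m + n - 1) div r"
    using increasing_div_less[OF incr _ \<open>0 < r\<close>, of "m + n - 1" m] assms(4,5) by simp
  show "f (m + n - 1) div r \<le> 4"
    using less_mult_imp_div_less[OF bound] by simp
qed

lemma not_ramsey_arrow_five_blocks:
  fixes m n :: nat and E :: "nat \<Rightarrow> nat \<Rightarrow> bool"
  assumes "m \<ge> 1" and "n \<ge> 1"
    and og: "ordered_graph (m + n) E" and st: "stitched m n E"
    and outer: "E 0 (m + n - 1)" and inner: "E (m - 1) m"
  shows "\<not> ramsey_arrow (5 * (min m n - 1)) (m + n) E"
proof
  define r where "r = min m n - 1"
  assume "ramsey_arrow (5 * (min m n - 1)) (m + n) E"
  then obtain col f where bound: "\<forall>x<m + n. f x < 5 * r"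
    and incr: "\<forall>x y. x < y \<and> y < m + n \<longrightarrow> f x < f y"
    and mono: "\<forall>x y. x < y \<and> E x y \<longrightarrow> block_colouring r (f x) (f y) = col"
    unfolding ramsey_arrow_def mono_copy_def r_def by blast
  define \<beta> where "\<beta> v = f v div r" for v
  have "f (m + n - 1) < 5 * r"
    using bound assms(1) by simp
  moreover from this have "0 < r"
    by (cases r) simp_all
  ultimately have blocks: "\<beta> 0 < \<beta> (m - 1)" "\<beta> (m - 1) \<le> \<beta> m"
    "\<beta> m < \<beta> (m + n - 1)" "\<beta> (m + n - 1) \<le> 4"
    unfolding \<beta>_def using increasing_end_blocks[OF incr] assms(1,2) by (auto simp: r_def)
  have outer_col: "((\<beta> 0, \<beta> (m + n - 1)) \<in> red_block_pairs) = col"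
    using mono outer assms(1,2) unfolding \<beta>_def block_colouring_def by simp
  have inner_col: "((\<beta> (m - 1), \<beta> m) \<in> red_block_pairs) = col"
    using mono inner assms(1) unfolding \<beta>_def block_colouring_def by simp
  have col
    using red_block_pair_nested[OF blocks] outer_col inner_col by blast
  then have "\<beta> 0 = 0"
    using red_block_pair_spread[of "\<beta> 0" "\<beta> (m + n - 1)"] outer_col blocks by linarith
  have "\<beta> (m - 1) \<in> {0, 4}"
    unfolding \<beta>_def
  proof (rule red_component_outer_blocks[of E r f 0])
    show "E y x" if "E x y" for x y
      using og that unfolding ordered_graph_def by blast
    show "block_colouring r (f x) (f y)" if "x < y" and "E x y" for x y
      using mono that \<open>col\<close> by blast
    show "f 0 div r \<in> {0, 4}"
      using \<open>\<beta> 0 = 0\<close> unfolding \<beta>_def by simp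
    show "E\<^sup>*\<^sup>* 0 (m - 1)"
      using st unfolding stitched_def by blast
  qed
  then show False
    using blocks \<open>\<beta> 0 = 0\<close> by auto
qed

theorem corollary3p2:
  fixes m n :: nat and E :: "nat \<Rightarrow> nat \<Rightarrow> bool"
  assumes "m \<ge> 1" and "n \<ge> 1"
    and "ordered_graph (m + n) E"
    and "two_ichromatic (m + n) E"
    and "independent E {0..<m}" and "independent E {m..<m + n}"
    and "stitched m n E"
    and "E 0 (m + n - 1)" and "E (m - 1) m"
  shows "ordered_ramsey (m + n) E \<ge> 5 * (min m n - 1) + 1"
  using less_ordered_ramsey[OF assms(3) not_ramsey_arrow_five_blocks[OF assms(1-3,7-9)]]
  by simp

end
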